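(* Let $M$ be a partial multiplication matrix, and let $\pi^\#$ be an $M$-indivisible $M$-gridded permutation with more than one point. Then there is a cycle of the row-column graph $G_M$ such that every cell corresponding to an edge of this cycle is non-empty in $\pi^\#$, and the gridded subpermutation of $\pi^\#$ consisting of the last point of each of these cells is $M$-indivisible.
   Context: A gridding matrix has entries in $\{0,1,-1\}$; an $m\times n$ one has $m$ columns, $n$ rows, $M_{ij}$ in column $i$ from the left and row $j$ from the bottom. An $M$-gridding of a permutation $\pi$ of length $L$ is a choice of vertical lines $\tfrac12=v_0\le\dots\le v_m=L+\tfrac12$ and horizontal lines $\tfrac12=h_0\le\dots\le h_n=L+\tfrac12$, not through points of $\pi$, such that in each cell $C_{ij}=\{v_{i-1}<x<v_i,\ h_{j-1}<y<h_j\}$ the points of $\pi$ are absent if $M_{ij}=0$, increasing if $M_{ij}=1$, decreasing if $M_{ij}=-1$; the result is an $M$-gridded permutation. The row-column graph $G_M$ is the bipartite graph on $\{1,\dots,m\}\cup\{1',\dots,n'\}$ with edge $ij'$ iff $M_{ij}\ne0$; cell $(i,j)$ corresponds to edge $ij'$. $M$ is a partial multiplication matrix: there are fixed $c_1,\dots,c_m,r_1,\dots,r_n\in\{\pm1\}$ with $M_{ij}=c_ir_j$ for each non-zero entry. Column $i$ is oriented left-to-right if $c_i=1$, right-to-left otherwise; row $j$ bottom-to-top if $r_j=1$, top-to-bottom otherwise. The points in a non-zero cell $(i,j)$ are thereby linearly ordered (consistently with both the column and row orientations); the last point of the cell is the final one in this order. $M$-sum: for $M$-gridded $\sigma^\#,\tau^\#$,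 $\sigma^\#\boxplus\tau^\#$ is the $M$-gridded permutation whose points are those of $\sigma^\#$ and $\tau^\#$, each in the cell it occupied, with the relative order among points of $\sigma^\#$ and among points of $\tau^\#$ unchanged, and such that in every column of cells all points of $\sigma^\#$ precede all points of $\tau^\#$ in the column's orientation and in every row of cells all points of $\sigma^\#$ precede all points of $\tau^\#$ in the row's orientation. An $M$-gridded permutation is $M$-divisible if it equals $\sigma^\#\boxplus\tau^\#$ with $\sigma^\#,\tau^\#$ non-empty, and $M$-indivisible otherwise. A gridded subpermutation inherits the cells of the points it keeps. *)

theory Defs
  imports Main "HOL.Real"
begin

text \<open>Gridding matrices are functions M :: nat => nat => int, used on columns 1..m
  and rows 1..n.  A gridded permutation is a triple (P, v, h): a finite set P of points
  in general position (distinct x- and distinct y-coordinates; only the relative order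
  matters) together with vertical lines v 0 .. v m and horizontal lines h 0 .. h n.\<close>

type_synonym gperm = "(nat \<times> nat) set \<times> (nat \<Rightarrow> real) \<times> (nat \<Rightarrow> real)"

definition gpts :: "gperm \<Rightarrow> (nat \<times> nat) set" where
  "gpts G = fst G"

definition incol :: "gperm \<Rightarrow> nat \<Rightarrow> nat \<times> nat \<Rightarrow> bool" where
  "incol G i p \<longleftrightarrow> p \<in> gpts G \<and> 1 \<le> i \<and>
     fst (snd G) (i - 1) < real (fst p) \<and> real (fst p) < fst (snd G) i"

definition inrow :: "gperm \<Rightarrow> nat \<Rightarrow> nat \<times> nat \<Rightarrow> bool" where
  "inrow G j p \<longleftrightarrow> p \<in> gpts G \<and> 1 \<le> j \<and>
     snd (snd G) (j - 1) < real (snd p) \<and> real (snd p) < snd (snd G) j"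

definition incell :: "gperm \<Rightarrow> nat \<Rightarrow> nat \<Rightarrow> nat \<times> nat \<Rightarrow> bool" where
  "incell G i j p \<longleftrightarrow> incol G i p \<and> inrow G j p"

definition gridded :: "(nat \<Rightarrow> nat \<Rightarrow> int) \<Rightarrow> nat \<Rightarrow> nat \<Rightarrow> gperm \<Rightarrow> bool" where
  "gridded M m n G \<longleftrightarrow>
     (let P = gpts G; v = fst (snd G); h = snd (snd G) in
       finite P \<and> inj_on fst P \<and> inj_on snd P \<and>
       (\<forall>k<m. v k \<le> v (Suc k)) \<and> (\<forall>k<n. h k \<le> h (Suc k)) \<and>
       (\<forall>p\<in>P. v 0 < real (fst p) \<and> real (fst p) < v m \<and>
                h 0 < real (snd p) \<and> real (snd p) < h n \<and>
                (\<forall>k\<le>m. real (fst p) \<noteq> v k) \<and> (\<forall>k\<le>n. real (snd p) \<noteq> h k)) \<and>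
       (\<forall>i\<in>{1..m}. \<forall>j\<in>{1..n}.
          (M i j = 0 \<longrightarrow> (\<forall>p. \<not> incell G i j p)) \<and>
          (M i j = 1 \<longrightarrow> (\<forall>p q. incell G i j p \<and> incell G i j q \<and> fst p < fst q
                                 \<longrightarrow> snd p < snd q)) \<and>
          (M i j = -1 \<longrightarrow> (\<forall>p q. incell G i j p \<and> incell G i j q \<and> fst p < fst q
                                 \<longrightarrow> snd p > snd q))))"

definition gridding_matrix :: "(nat \<Rightarrow> nat \<Rightarrow> int) \<Rightarrow> nat \<Rightarrow> nat \<Rightarrow> bool" where
  "gridding_matrix M m n \<longleftrightarrow> (\<forall>i\<in>{1..m}. \<forall>j\<in>{1..n}. M i j \<in> {0, 1, -1})"

definition pmm_witness :: "(nat \<Rightarrow> nat \<Rightarrow> int) \<Rightarrow> nat \<Rightarrow> nat \<Rightarrow> (nat \<Rightarrow> int) \<Rightarrow> (nat \<Rightarrow> int) \<Rightarrow> bool" where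
  "pmm_witness M m n c r \<longleftrightarrow>
     (\<forall>i\<in>{1..m}. c i \<in> {1, -1}) \<and> (\<forall>j\<in>{1..n}. r j \<in> {1, -1}) \<and>
     (\<forall>i\<in>{1..m}. \<forall>j\<in>{1..n}. M i j \<noteq> 0 \<longrightarrow> M i j = c i * r j)"

definition col_before :: "(nat \<Rightarrow> int) \<Rightarrow> nat \<Rightarrow> nat \<times> nat \<Rightarrow> nat \<times> nat \<Rightarrow> bool" where
  "col_before c i p q \<longleftrightarrow> (if c i = 1 then fst p < fst q else fst q < fst p)"

definition row_before :: "(nat \<Rightarrow> int) \<Rightarrow> nat \<Rightarrow> nat \<times> nat \<Rightarrow> nat \<times> nat \<Rightarrow> bool" where
  "row_before r j p q \<longleftrightarrow> (if r j = 1 then snd p < snd q else snd q < snd p)"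

definition restr :: "gperm \<Rightarrow> (nat \<times> nat) set \<Rightarrow> gperm" where
  "restr G S = (gpts G \<inter> S, snd G)"

text \<open>Two gridded permutations are the same gridded permutation iff there is an
  order isomorphism of their points preserving cells.\<close>
definition gp_iso :: "nat \<Rightarrow> nat \<Rightarrow> gperm \<Rightarrow> gperm \<Rightarrow> bool" where
  "gp_iso m n G H \<longleftrightarrow> (\<exists>f. bij_betw f (gpts G) (gpts H) \<and>
     (\<forall>p\<in>gpts G. \<forall>q\<in>gpts G. (fst p < fst q \<longleftrightarrow> fst (f p) < fst (f q)) \<and>
                               (snd p < snd q \<longleftrightarrow> snd (f p) < snd (f q))) \<and>
     (\<forall>p\<in>gpts G. \<forall>i\<in>{1..m}. \<forall>j\<in>{1..n}. incell G i j p \<longleftrightarrow> incell H i j (f p)))"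

definition is_Msum :: "nat \<Rightarrow> nat \<Rightarrow> (nat \<Rightarrow> int) \<Rightarrow> (nat \<Rightarrow> int) \<Rightarrow> gperm \<Rightarrow> gperm \<Rightarrow> gperm \<Rightarrow> bool" where
  "is_Msum m n c r Pi Sg Tg \<longleftrightarrow>
     (\<exists>S T. S \<union> T = gpts Pi \<and> S \<inter> T = {} \<and>
        gp_iso m n (restr Pi S) Sg \<and> gp_iso m n (restr Pi T) Tg \<and>
        (\<forall>s\<in>S. \<forall>t\<in>T.
           (\<forall>i\<in>{1..m}. incol Pi i s \<and> incol Pi i t \<longrightarrow> col_before c i s t) \<and>
           (\<forall>j\<in>{1..n}. inrow Pi j s \<and> inrow Pi j t \<longrightarrow> row_before r j s t)))"

definition M_divisible :: "(nat \<Rightarrow> nat \<Rightarrow> int) \<Rightarrow> nat \<Rightarrow> nat \<Rightarrow> (nat \<Rightarrow> int) \<Rightarrow> (nat \<Rightarrow> int) \<Rightarrow> gperm \<Rightarrow> bool" where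
  "M_divisible M m n c r Pi \<longleftrightarrow>
     (\<exists>Sg Tg. gridded M m n Sg \<and> gridded M m n Tg \<and>
        gpts Sg \<noteq> {} \<and> gpts Tg \<noteq> {} \<and> is_Msum m n c r Pi Sg Tg)"

definition M_indivisible :: "(nat \<Rightarrow> nat \<Rightarrow> int) \<Rightarrow> nat \<Rightarrow> nat \<Rightarrow> (nat \<Rightarrow> int) \<Rightarrow> (nat \<Rightarrow> int) \<Rightarrow> gperm \<Rightarrow> bool" where
  "M_indivisible M m n c r Pi \<longleftrightarrow> \<not> M_divisible M m n c r Pi"

text \<open>Row-column graph: vertices Inl i (column i, 1..m) and Inr j (row j', 1..n).\<close>
definition rc_adj :: "(nat \<Rightarrow> nat \<Rightarrow> int) \<Rightarrow> nat \<Rightarrow> nat \<Rightarrow> nat + nat \<Rightarrow> nat + nat \<Rightarrow> bool" where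
  "rc_adj M m n x y \<longleftrightarrow>
     (\<exists>i\<in>{1..m}. \<exists>j\<in>{1..n}. M i j \<noteq> 0 \<and>
        ((x = Inl i \<and> y = Inr j) \<or> (x = Inr j \<and> y = Inl i)))"

definition rc_cycle :: "(nat \<Rightarrow> nat \<Rightarrow> int) \<Rightarrow> nat \<Rightarrow> nat \<Rightarrow> (nat + nat) list \<Rightarrow> bool" where
  "rc_cycle M m n vs \<longleftrightarrow> length vs \<ge> 3 \<and> distinct vs \<and>
     (\<forall>k<length vs. rc_adj M m n (vs ! k) (vs ! ((k + 1) mod length vs)))"

definition cycle_cells :: "(nat + nat) list \<Rightarrow> (nat \<times> nat) set" where
  "cycle_cells vs = {(i, j). \<exists>k<length vs.
      {vs ! k, vs ! ((k + 1) mod length vs)} = {Inl i, Inr j}}"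

text \<open>p is the last point of cell (i,j) (w.r.t. the column orientation, which is
  consistent with the row orientation in a non-zero cell).\<close>
definition last_in_cell :: "(nat \<Rightarrow> int) \<Rightarrow> gperm \<Rightarrow> nat \<Rightarrow> nat \<Rightarrow> nat \<times> nat \<Rightarrow> bool" where
  "last_in_cell c G i j p \<longleftrightarrow> incell G i j p \<and>
     (\<forall>q. incell G i j q \<and> q \<noteq> p \<longrightarrow> col_before c i q p)"

end

theory Submission
  imports Defs
begin

(*
  For an occupied column or row x (a line, encoded as in rc_adj by Inl i or Inr j), let
  line_last x be its last point in the orientation of x and next_line x the other line through
  that point.  A point that is last both in its column and in its row splits off as a final
  M-summand, so in an M-indivisible permutation line_last x precedes line_last (next_line x)
  along next_line x.  Inside a cell of a partial multiplication matrix the column and row orders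
  agree, hence next_line (next_line x) is never x.  Iterating next_line therefore runs into a
  cycle of G_M of length at least 3; the cell of each of its edges contains the point
  line_last x as its last point.  In any M-sum decomposition of these points, the summand that
  contains line_last x also contains line_last (next_line x), so going round the cycle it
  contains all of them.
*)

section \<open>Restrictions and M-sums\<close>

lemma gpts_restr [simp]: "gpts (restr G S) = gpts G \<inter> S"
  by (simp add: restr_def gpts_def)

lemma incol_restr [simp]: "incol (restr G S) i p \<longleftrightarrow> incol G i p \<and> p \<in> S"
  by (auto simp: incol_def restr_def gpts_def)

lemma inrow_restr [simp]: "inrow (restr G S) j p \<longleftrightarrow> inrow G j p \<and> p \<in> S"
  by (auto simp: inrow_def restr_def gpts_def)

lemma incell_restr [simp]: "incell (restr G S) i j p \<longleftrightarrow> incell G i j p \<and> p \<in> S"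
  by (auto simp: incell_def)

lemma gridded_restr:
  assumes "gridded M m n G" shows "gridded M m n (restr G S)"
proof -
  have lines: "snd (restr G S) = snd G"
    by (simp add: restr_def)
  show ?thesis
    using assms unfolding gridded_def Let_def gpts_restr incell_restr lines
    apply (elim conjE, intro conjI)
    subgoal by simp
    subgoal by (metis inj_on_Int)
    subgoal by (metis inj_on_Int)
    subgoal by assumption
    subgoal by assumption
    subgoal by fast
    subgoal by (intro ballI conjI impI allI notI; blast)
    done
qed

lemma gp_iso_refl: "gp_iso m n G G"
  unfolding gp_iso_def by (rule exI[of _ id]) auto

definition M_split :: "nat \<Rightarrow> nat \<Rightarrow> (nat \<Rightarrow> int) \<Rightarrow> (nat \<Rightarrow> int) \<Rightarrow> gperm \<Rightarrow>
    (nat \<times> nat) set \<Rightarrow> (nat \<times> nat) set \<Rightarrow> bool" where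
  "M_split m n c r G S T \<longleftrightarrow> S \<noteq> {} \<and> T \<noteq> {} \<and> S \<union> T = gpts G \<and> S \<inter> T = {} \<and>
     (\<forall>s\<in>S. \<forall>t\<in>T.
        (\<forall>i\<in>{1..m}. incol G i s \<and> incol G i t \<longrightarrow> col_before c i s t) \<and>
        (\<forall>j\<in>{1..n}. inrow G j s \<and> inrow G j t \<longrightarrow> row_before r j s t))"

lemma M_divisible_iff_split:
  assumes "gridded M m n G"
  shows "M_divisible M m n c r G \<longleftrightarrow> (\<exists>S T. M_split m n c r G S T)"
proof
  assume "M_divisible M m n c r G"
  then obtain Sg Tg S T where "gpts Sg \<noteq> {}" "gpts Tg \<noteq> {}"
    and "gp_iso m n (restr G S) Sg" "gp_iso m n (restr G T) Tg"
    and "S \<union> T = gpts G" "S \<inter> T = {}"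
    and "\<forall>s\<in>S. \<forall>t\<in>T.
        (\<forall>i\<in>{1..m}. incol G i s \<and> incol G i t \<longrightarrow> col_before c i s t) \<and>
        (\<forall>j\<in>{1..n}. inrow G j s \<and> inrow G j t \<longrightarrow> row_before r j s t)"
    unfolding M_divisible_def is_Msum_def by blast
  moreover have "S \<noteq> {}" "T \<noteq> {}"
    using calculation unfolding gp_iso_def bij_betw_def by auto
  ultimately show "\<exists>S T. M_split m n c r G S T"
    unfolding M_split_def by blast
next
  assume "\<exists>S T. M_split m n c r G S T"
  then obtain S T where split: "M_split m n c r G S T"
    by blast
  then have "is_Msum m n c r G (restr G S) (restr G T)"
    unfolding is_Msum_def M_split_def by (blast intro: gp_iso_refl)
  moreover have "gpts (restr G S) \<noteq> {}" "gpts (restr G T) \<noteq> {}"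
    using split unfolding M_split_def by auto
  ultimately show "M_divisible M m n c r G"
    unfolding M_divisible_def using gridded_restr[OF assms] by blast
qed

lemma last_in_cell_unique:
  "last_in_cell c G i j p \<Longrightarrow> last_in_cell c G i j p' \<Longrightarrow> p = p'"
  unfolding last_in_cell_def col_before_def by (metis less_asym)

lemma grid_interval_exists:
  fixes v :: "nat \<Rightarrow> real"
  assumes "v 0 < x" "x < v m" "\<forall>k\<le>m. x \<noteq> v k"
  shows "\<exists>i\<in>{1..m}. v (i - 1) < x \<and> x < v i"
proof -
  define i where "i = (LEAST k. x < v k)"
  have "x < v i" "i \<le> m"
    unfolding i_def by (auto intro: LeastI[of _ m] Least_le assms(2))
  moreover have "i \<noteq> 0"
    using \<open>x < v i\<close> assms(1) by (metis less_asym)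
  moreover have "\<not> x < v (i - 1)"
  proof
    assume "x < v (i - 1)"
    then have "i \<le> i - 1"
      unfolding i_def by (rule Least_le)
    then show False
      using \<open>i \<noteq> 0\<close> by simp
  qed
  moreover have "x \<noteq> v (i - 1)"
    using assms(3) \<open>i \<le> m\<close> by simp
  ultimately show ?thesis
    by (intro bexI[of _ i]) auto
qed

lemma grid_interval_unique:
  fixes v :: "nat \<Rightarrow> real"
  assumes mono: "\<forall>k<m. v k \<le> v (Suc k)" and i: "i \<in> {1..m}" and i': "i' \<in> {1..m}"
    and x: "v (i - 1) < x" "x < v i" and x': "v (i' - 1) < x" "x < v i'"
  shows "i = i'"
proof (rule ccontr)
  have le: "v a \<le> v b" if "a \<le> b" "b \<le> m" for a b
    by (rule lift_Suc_mono_le_ivl[where N = "{..<m}"]) (use mono that in auto)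
  assume "i \<noteq> i'"
  then consider "i \<le> i' - 1" "i' - 1 \<le> m" | "i' \<le> i - 1" "i - 1 \<le> m"
    using i i' by fastforce
  then show False
  proof cases
    case 1
    then show False
      using le[OF 1] x(2) x'(1) by linarith
  next
    case 2
    then show False
      using le[OF 2] x(1) x'(2) by linarith
  qed
qed

section \<open>Periodic orbits\<close>

lemma funpow_mult_period:
  assumes "(f ^^ t) y = y"
  shows "(f ^^ (t * q)) y = y"
  by (induction q) (simp_all add: funpow_add assms)

lemma funpow_mod_period:
  assumes "(f ^^ t) y = y"
  shows "(f ^^ (k mod t)) y = (f ^^ k) y"
proof -
  have "(f ^^ k) y = (f ^^ (k mod t)) ((f ^^ (t * (k div t))) y)"
    by (metis comp_apply funpow_add mod_mult_div_eq)
  then show ?thesis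
    by (simp add: funpow_mult_period[OF assms])
qed

lemma periodic_orbit_induct:
  assumes "0 < t" "(f ^^ t) y = y" and base: "P ((f ^^ e) y)"
    and step: "\<And>k. P ((f ^^ k) y) \<Longrightarrow> P (f ((f ^^ k) y))"
  shows "P ((f ^^ k) y)"
proof -
  have from_e: "P ((f ^^ (e + d)) y)" for d
    by (induction d) (simp_all add: base step)
  obtain t' where "t = Suc t'"
    using assms(1) gr0_conv_Suc by blast
  then have "e + (k + t' * e) = k + t * e"
    by simp
  then have "(f ^^ (e + (k + t' * e))) y = (f ^^ (k + t * e)) y"
    by (rule arg_cong)
  also have "\<dots> = (f ^^ k) ((f ^^ (t * e)) y)"
    by (simp add: funpow_add)
  also have "\<dots> = (f ^^ k) y"
    using funpow_mult_period[OF assms(2)] by simp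
  finally show ?thesis
    using from_e[of "k + t' * e"] by (simp only:)
qed

lemma funpow_eventually_periodic:
  assumes "finite V" "x \<in> V" "f ` V \<subseteq> V"
  obtains a t where "0 < t" "(f ^^ t) ((f ^^ a) x) = (f ^^ a) x"
proof -
  have orbit: "(f ^^ k) x \<in> V" for k
    by (induction k) (use assms in auto)
  have "\<not> inj_on (\<lambda>k. (f ^^ k) x) {..card V}"
  proof
    assume "inj_on (\<lambda>k. (f ^^ k) x) {..card V}"
    then have "card {..card V} \<le> card V"
      using card_inj_on_le orbit assms(1) by blast
    then show False
      by simp
  qed
  then obtain a b where "a < b" "(f ^^ a) x = (f ^^ b) x"
    unfolding inj_on_def by (metis linorder_neqE_nat)
  moreover have "(f ^^ (b - a)) ((f ^^ a) x) = (f ^^ b) x"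
    using \<open>a < b\<close> by (metis comp_apply funpow_add le_add_diff_inverse2 less_imp_le)
  ultimately show ?thesis
    using that[of "b - a" a] by simp
qed

lemma inj_on_funpow_minimal_period:
  assumes period: "(f ^^ t) y = y" and minimal: "\<And>s. 0 < s \<Longrightarrow> s < t \<Longrightarrow> (f ^^ s) y \<noteq> y"
  shows "inj_on (\<lambda>k. (f ^^ k) y) {..<t}"
proof (rule linorder_inj_onI')
  fix i j
  assume "i \<in> {..<t}" "j \<in> {..<t}" "i < j"
  show "(f ^^ i) y \<noteq> (f ^^ j) y"
  proof
    assume eq: "(f ^^ i) y = (f ^^ j) y"
    have "(f ^^ (t - j + i)) y = (f ^^ (t - j)) ((f ^^ j) y)"
      by (simp add: funpow_add eq)
    also have "\<dots> = y"
      using \<open>j \<in> {..<t}\<close> period by (metis comp_apply funpow_add le_add_diff_inverse2 lessThan_iff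
          less_imp_le)
    finally have "(f ^^ (t - j + i)) y = y" .
    moreover have "(f ^^ (t - j + i)) y \<noteq> y"
      using \<open>i < j\<close> \<open>j \<in> {..<t}\<close> by (intro minimal) auto
    ultimately show False
      by contradiction
  qed
qed

lemma funpow_periodic_point:
  assumes "finite V" "x \<in> V" "f ` V \<subseteq> V"
  obtains y t where "y \<in> V" "0 < t" "(f ^^ t) y = y" "inj_on (\<lambda>k. (f ^^ k) y) {..<t}"
proof -
  obtain a t0 where "0 < t0" "(f ^^ t0) ((f ^^ a) x) = (f ^^ a) x"
    using funpow_eventually_periodic[OF assms] .
  define y where "y = (f ^^ a) x"
  define t where "t = (LEAST t. 0 < t \<and> (f ^^ t) y = y)"
  have "\<exists>t. 0 < t \<and> (f ^^ t) y = y"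
    using \<open>0 < t0\<close> \<open>(f ^^ t0) ((f ^^ a) x) = (f ^^ a) x\<close> unfolding y_def by blast
  then have t: "0 < t" "(f ^^ t) y = y"
    unfolding t_def by (metis (mono_tags, lifting) LeastI_ex)+
  moreover have "inj_on (\<lambda>k. (f ^^ k) y) {..<t}"
  proof (rule inj_on_funpow_minimal_period[OF t(2)])
    fix s
    assume "0 < s" "s < t"
    then show "(f ^^ s) y \<noteq> y"
      using not_less_Least[of s "\<lambda>t. 0 < t \<and> (f ^^ t) y = y"] unfolding t_def by blast
  qed
  moreover have "y \<in> V"
    unfolding y_def using assms by (induction a) auto
  ultimately show ?thesis
    using that by blast
qed

definition orbit_list :: "('a \<Rightarrow> 'a) \<Rightarrow> 'a \<Rightarrow> nat \<Rightarrow> 'a list" where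
  "orbit_list f y t = map (\<lambda>k. (f ^^ k) y) [0..<t]"

lemma length_orbit_list [simp]: "length (orbit_list f y t) = t"
  by (simp add: orbit_list_def)

lemma nth_orbit_list [simp]: "k < t \<Longrightarrow> orbit_list f y t ! k = (f ^^ k) y"
  by (simp add: orbit_list_def)

lemma nth_orbit_list_Suc_mod:
  assumes "0 < t" "(f ^^ t) y = y"
  shows "orbit_list f y t ! (Suc k mod t) = (f ^^ Suc k) y"
  using assms by (simp add: funpow_mod_period)

lemma cycle_cells_orbit_list:
  assumes "0 < t" "(f ^^ t) y = y"
  shows "cycle_cells (orbit_list f y t) =
    {(i, j). \<exists>k. {(f ^^ k) y, f ((f ^^ k) y)} = {Inl i, Inr j}}"
  unfolding cycle_cells_def length_orbit_list Suc_eq_plus1[symmetric]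
proof safe
  fix i j k
  assume "k < t" "{orbit_list f y t ! k, orbit_list f y t ! (Suc k mod t)} = {Inl i, Inr j}"
  then show "\<exists>k. {(f ^^ k) y, f ((f ^^ k) y)} = {Inl i, Inr j}"
    using nth_orbit_list_Suc_mod[OF assms] by auto
next
  fix i j k
  assume edge: "{(f ^^ k) y, f ((f ^^ k) y)} = {Inl i, Inr j}"
  have "orbit_list f y t ! (k mod t) = (f ^^ k) y"
    using assms by (simp add: funpow_mod_period)
  moreover have "orbit_list f y t ! (Suc (k mod t) mod t) = (f ^^ Suc k) y"
    using nth_orbit_list_Suc_mod[OF assms] by (simp add: mod_Suc_eq)
  ultimately show "\<exists>k'<t. {orbit_list f y t ! k', orbit_list f y t ! (Suc k' mod t)} = {Inl i, Inr j}"
    using assms(1) edge by (intro exI[of _ "k mod t"]) simp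
qed

lemma rc_cycle_orbit_list:
  assumes "3 \<le> t" "(f ^^ t) y = y" "inj_on (\<lambda>k. (f ^^ k) y) {..<t}"
    and adj: "\<And>k. rc_adj M m n ((f ^^ k) y) (f ((f ^^ k) y))"
  shows "rc_cycle M m n (orbit_list f y t)"
  unfolding rc_cycle_def length_orbit_list Suc_eq_plus1[symmetric]
proof (intro conjI allI impI)
  show "distinct (orbit_list f y t)"
    using assms(3) by (simp add: orbit_list_def distinct_map atLeast0LessThan)
  fix k
  assume "k < t"
  then show "rc_adj M m n (orbit_list f y t ! k) (orbit_list f y t ! (Suc k mod t))"
    using adj[of k] nth_orbit_list_Suc_mod[of t f y k] assms(1,2) by simp
qed (use assms(1) in simp)

section \<open>Columns and rows of a gridded permutation\<close>

locale pmm_gridding =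
  fixes M :: "nat \<Rightarrow> nat \<Rightarrow> int" and m n :: nat and c r :: "nat \<Rightarrow> int" and Pi :: gperm
  assumes pmm: "pmm_witness M m n c r"
    and gridded: "gridded M m n Pi"
begin

definition on_line :: "nat + nat \<Rightarrow> nat \<times> nat \<Rightarrow> bool" where
  "on_line x p \<longleftrightarrow> (case x of Inl i \<Rightarrow> i \<in> {1..m} \<and> incol Pi i p | Inr j \<Rightarrow> j \<in> {1..n} \<and> inrow Pi j p)"

definition line_before :: "nat + nat \<Rightarrow> nat \<times> nat \<Rightarrow> nat \<times> nat \<Rightarrow> bool" where
  "line_before x p q \<longleftrightarrow> (case x of Inl i \<Rightarrow> col_before c i p q | Inr j \<Rightarrow> row_before r j p q)"

definition line_key :: "nat + nat \<Rightarrow> nat \<times> nat \<Rightarrow> int" where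
  "line_key x p = (case x of
      Inl i \<Rightarrow> if c i = 1 then int (fst p) else - int (fst p)
    | Inr j \<Rightarrow> if r j = 1 then int (snd p) else - int (snd p))"

definition occupied :: "nat + nat \<Rightarrow> bool" where
  "occupied x \<longleftrightarrow> (\<exists>p. on_line x p)"

definition line_last :: "nat + nat \<Rightarrow> nat \<times> nat" where
  "line_last x = arg_max (line_key x) (on_line x)"

definition next_line :: "nat + nat \<Rightarrow> nat + nat" where
  "next_line x = (THE y. isl y \<noteq> isl x \<and> on_line y (line_last x))"

lemma line_before_iff_key: "line_before x p q \<longleftrightarrow> line_key x p < line_key x q"
  by (auto simp: line_before_def line_key_def col_before_def row_before_def split: sum.split)

lemma on_line_gpts: "on_line x p \<Longrightarrow> p \<in> gpts Pi"
  by (auto simp: on_line_def incol_def inrow_def split: sum.splits)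

lemma line_key_inj:
  assumes "on_line x p" "on_line x q" "line_key x p = line_key x q"
  shows "p = q"
proof -
  have pq: "p \<in> gpts Pi" "q \<in> gpts Pi"
    using assms(1,2) by (simp_all add: on_line_gpts)
  have inj: "inj_on fst (gpts Pi)" "inj_on snd (gpts Pi)"
    using gridded by (simp_all add: gridded_def Let_def)
  show ?thesis
  proof (cases x)
    case Inl
    then have "fst p = fst q"
      using assms(3) by (simp add: line_key_def split: if_splits)
    then show ?thesis
      using inj(1) pq by (simp add: inj_on_eq_iff)
  next
    case Inr
    then have "snd p = snd q"
      using assms(3) by (simp add: line_key_def split: if_splits)
    then show ?thesis
      using inj(2) pq by (simp add: inj_on_eq_iff)
  qed
qed

lemma is_arg_max_line_last:
  assumes "occupied x"
  shows "is_arg_max (line_key x) (on_line x) (line_last x)"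
proof -
  let ?K = "line_key x ` {p. on_line x p}"
  have "finite (gpts Pi)"
    using gridded by (simp add: gridded_def Let_def)
  then have fin: "finite ?K"
    using on_line_gpts by (blast intro: finite_subset)
  have "?K \<noteq> {}"
    using assms by (simp add: occupied_def)
  then have "Max ?K \<in> ?K"
    using fin by (rule Max_in[rotated])
  then obtain p where p: "on_line x p" "line_key x p = Max ?K"
    by auto
  have "line_key x q \<le> line_key x p" if "on_line x q" for q
    unfolding p(2) using fin that by simp
  with p(1) have "is_arg_max (line_key x) (on_line x) p"
    by (simp add: is_arg_max_linorder)
  then show ?thesis
    unfolding line_last_def arg_max_def by (rule someI)
qed

lemma line_last_on_line: "occupied x \<Longrightarrow> on_line x (line_last x)"
  using is_arg_max_line_last by (simp add: is_arg_max_def)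

lemma line_key_le_line_last: "occupied x \<Longrightarrow> on_line x q \<Longrightarrow> line_key x q \<le> line_key x (line_last x)"
  using is_arg_max_line_last unfolding is_arg_max_linorder by blast

lemma line_before_line_last:
  assumes "occupied x" "on_line x q" "q \<noteq> line_last x"
  shows "line_before x q (line_last x)"
proof -
  have "line_key x q \<noteq> line_key x (line_last x)"
    using line_key_inj line_last_on_line[OF assms(1)] assms(2,3) by blast
  then show ?thesis
    using line_key_le_line_last[OF assms(1,2)] by (simp add: line_before_iff_key)
qed

lemma ex_on_line:
  assumes "p \<in> gpts Pi"
  shows "\<exists>x. isl x = b \<and> on_line x p"
proof -
  have bounds: "fst (snd Pi) 0 < real (fst p) \<and> real (fst p) < fst (snd Pi) m \<and>
      snd (snd Pi) 0 < real (snd p) \<and> real (snd p) < snd (snd Pi) n \<and>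
      (\<forall>k\<le>m. real (fst p) \<noteq> fst (snd Pi) k) \<and> (\<forall>k\<le>n. real (snd p) \<noteq> snd (snd Pi) k)"
    using gridded assms by (simp add: gridded_def Let_def)
  obtain i where "i \<in> {1..m}" "fst (snd Pi) (i - 1) < real (fst p)" "real (fst p) < fst (snd Pi) i"
    using grid_interval_exists[of "fst (snd Pi)" "real (fst p)" m] bounds by blast
  then have col: "on_line (Inl i) p"
    using assms by (simp add: on_line_def incol_def)
  obtain j where "j \<in> {1..n}" "snd (snd Pi) (j - 1) < real (snd p)" "real (snd p) < snd (snd Pi) j"
    using grid_interval_exists[of "snd (snd Pi)" "real (snd p)" n] bounds by blast
  then have row: "on_line (Inr j) p"
    using assms by (simp add: on_line_def inrow_def)
  show ?thesis
  proof (cases b)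
    case True
    with col show ?thesis by (intro exI[of _ "Inl i"]) simp
  next
    case False
    with row show ?thesis by (intro exI[of _ "Inr j"]) simp
  qed
qed

lemma on_line_unique:
  assumes "on_line x p" "on_line y p" "isl x = isl y"
  shows "x = y"
proof (cases x)
  case (Inl i)
  then obtain i' where y: "y = Inl i'"
    using assms(3) by (cases y) auto
  have "\<forall>k<m. fst (snd Pi) k \<le> fst (snd Pi) (Suc k)"
    using gridded by (simp add: gridded_def Let_def)
  moreover have "i \<in> {1..m}" "incol Pi i p" "i' \<in> {1..m}" "incol Pi i' p"
    using assms(1,2) Inl y by (simp_all add: on_line_def)
  ultimately have "i = i'"
    by (intro grid_interval_unique[of m "fst (snd Pi)" i i' "real (fst p)"]) (auto simp: incol_def)
  then show ?thesis
    using Inl y by simp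
next
  case (Inr j)
  then obtain j' where y: "y = Inr j'"
    using assms(3) by (cases y) auto
  have "\<forall>k<n. snd (snd Pi) k \<le> snd (snd Pi) (Suc k)"
    using gridded by (simp add: gridded_def Let_def)
  moreover have "j \<in> {1..n}" "inrow Pi j p" "j' \<in> {1..n}" "inrow Pi j' p"
    using assms(1,2) Inr y by (simp_all add: on_line_def)
  ultimately have "j = j'"
    by (intro grid_interval_unique[of n "snd (snd Pi)" j j' "real (snd p)"]) (auto simp: inrow_def)
  then show ?thesis
    using Inr y by simp
qed

lemma isl_next_line_line_last_on_next_line:
  assumes "occupied x"
  shows "isl (next_line x) \<noteq> isl x \<and> on_line (next_line x) (line_last x)"
proof -
  obtain y where "isl y = (\<not> isl x)" "on_line y (line_last x)"
    using ex_on_line[OF on_line_gpts[OF line_last_on_line[OF assms]]] by blast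
  then have "\<exists>!y. isl y \<noteq> isl x \<and> on_line y (line_last x)"
    using on_line_unique[of _ "line_last x"] by (intro ex1I[of _ y]) auto
  then show ?thesis
    unfolding next_line_def by (rule theI')
qed

lemma isl_next_line: "occupied x \<Longrightarrow> isl (next_line x) \<noteq> isl x"
  using isl_next_line_line_last_on_next_line by blast

lemma line_last_on_next_line: "occupied x \<Longrightarrow> on_line (next_line x) (line_last x)"
  using isl_next_line_line_last_on_next_line by blast

lemma occupied_next_line: "occupied x \<Longrightarrow> occupied (next_line x)"
  using line_last_on_next_line occupied_def by blast

lemma lines_through_line_last:
  assumes "occupied x" "on_line y (line_last x)"
  shows "y = x \<or> y = next_line x"
  using on_line_unique[OF assms(2)] line_last_on_line[OF assms(1)] isl_next_line[OF assms(1)]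
    line_last_on_next_line[OF assms(1)]
  by (cases "isl y = isl x") auto

lemma incell_nonzero:
  assumes "i \<in> {1..m}" "j \<in> {1..n}" "incell Pi i j p"
  shows "M i j \<noteq> 0"
proof -
  have "M i j = 0 \<longrightarrow> (\<forall>p. \<not> incell Pi i j p)"
    using gridded assms(1,2) unfolding gridded_def Let_def by blast
  then show ?thesis
    using assms(3) by blast
qed

lemma cell_orders_agree:
  assumes "i \<in> {1..m}" "j \<in> {1..n}" "incell Pi i j p" "incell Pi i j q" "p \<noteq> q"
  shows "col_before c i p q \<longleftrightarrow> row_before r j p q"
proof -
  have cell: "(M i j = 1 \<longrightarrow> (\<forall>p q. incell Pi i j p \<and> incell Pi i j q \<and> fst p < fst q \<longrightarrow> snd p < snd q)) \<and>
      (M i j = -1 \<longrightarrow> (\<forall>p q. incell Pi i j p \<and> incell Pi i j q \<and> fst p < fst q \<longrightarrow> snd p > snd q))"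
    using gridded assms(1,2) by (simp add: gridded_def Let_def)
  have "p \<in> gpts Pi" "q \<in> gpts Pi"
    using assms(3,4) by (simp_all add: incell_def incol_def)
  then have "fst p \<noteq> fst q" "snd p \<noteq> snd q"
    using gridded assms(5) by (auto simp: gridded_def Let_def inj_on_eq_iff)
  then have flip: "fst q < fst p \<longleftrightarrow> \<not> fst p < fst q" "snd q < snd p \<longleftrightarrow> \<not> snd p < snd q"
    by auto
  have "M i j \<noteq> 0"
    using incell_nonzero assms(1-3) .
  then have sign: "M i j = c i * r j" "c i \<in> {1, -1}" "r j \<in> {1, -1}"
    using pmm assms(1,2) by (auto simp: pmm_witness_def)
  have "fst p < fst q \<longrightarrow> snd p < snd q" "fst q < fst p \<longrightarrow> snd q < snd p" if "M i j = 1"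
    using cell that assms(3,4) by blast+
  then have inc: "fst p < fst q \<longleftrightarrow> snd p < snd q" if "M i j = 1"
    using that flip by blast
  have "fst p < fst q \<longrightarrow> snd q < snd p" "fst q < fst p \<longrightarrow> snd p < snd q" if "M i j = -1"
    using cell that assms(3,4) by blast+
  then have dec: "fst p < fst q \<longleftrightarrow> snd q < snd p" if "M i j = -1"
    using that flip by blast
  show ?thesis
    using sign inc dec flip unfolding col_before_def row_before_def by auto
qed

lemma line_before_crossing_lines:
  assumes "on_line x p" "on_line y p" "on_line x q" "on_line y q" "isl x \<noteq> isl y" "p \<noteq> q"
  shows "line_before x p q \<longleftrightarrow> line_before y p q"
proof (cases x)
  case (Inl i)
  then obtain j where y: "y = Inr j"
    using assms(5) by (cases y) auto
  show ?thesis
    using cell_orders_agree[of i j p q] assms Inl y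
    by (simp add: on_line_def line_before_def incell_def)
next
  case (Inr j)
  then obtain i where y: "y = Inl i"
    using assms(5) by (cases y) auto
  show ?thesis
    using cell_orders_agree[of i j p q] assms Inr y
    by (simp add: on_line_def line_before_def incell_def)
qed

lemma next_line_edge:
  assumes "occupied x"
  obtains i j where "{x, next_line x} = {Inl i, Inr j}"
proof (cases x)
  case (Inl i)
  then have "\<not> isl (next_line x)"
    using isl_next_line[OF assms] by simp
  then have "next_line x = Inr (projr (next_line x))"
    by simp
  then show ?thesis
    using that Inl by metis
next
  case (Inr j)
  then have "isl (next_line x)"
    using isl_next_line[OF assms] by simp
  then have "next_line x = Inl (projl (next_line x))"
    by simp
  then show ?thesis
    using that Inr by (metis insert_commute)
qed

lemma line_last_on_edge:
  assumes "occupied x" "{x, next_line x} = {Inl i, Inr j}"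
  shows "on_line (Inl i) (line_last x)" and "on_line (Inr j) (line_last x)"
  using assms(2) line_last_on_line[OF assms(1)] line_last_on_next_line[OF assms(1)]
  by (auto simp: doubleton_eq_iff)

lemma incell_line_last_edge:
  assumes "occupied x" "{x, next_line x} = {Inl i, Inr j}"
  shows "incell Pi i j (line_last x)"
  using line_last_on_edge[OF assms] by (simp add: on_line_def incell_def)

lemma last_in_cell_iff_line_last:
  assumes "occupied x" and edge: "{x, next_line x} = {Inl i, Inr j}"
  shows "last_in_cell c Pi i j p \<longleftrightarrow> p = line_last x"
proof -
  let ?l = "line_last x"
  have x_cases: "x = Inl i \<or> x = Inr j"
    using edge by (auto simp: doubleton_eq_iff)
  note l_on = line_last_on_edge[OF assms]
  have cell_iff: "incell Pi i j q \<longleftrightarrow> on_line (Inl i) q \<and> on_line (Inr j) q" for q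
    using l_on by (auto simp: on_line_def incell_def)
  have "col_before c i q ?l" if "incell Pi i j q" "q \<noteq> ?l" for q
  proof -
    have q_on: "on_line (Inl i) q" "on_line (Inr j) q"
      using that(1) cell_iff by auto
    have "on_line x q"
      using q_on x_cases by auto
    then have "line_before x q ?l"
      using line_before_line_last[OF assms(1)] that(2) by blast
    then have "line_before (Inl i) q ?l"
      using x_cases line_before_crossing_lines[OF q_on(2) q_on(1) l_on(2) l_on(1)] that(2) by auto
    then show ?thesis
      by (simp add: line_before_def)
  qed
  then have "last_in_cell c Pi i j ?l"
    unfolding last_in_cell_def using cell_iff l_on by blast
  then show ?thesis
    using last_in_cell_unique by blast
qed

lemma rc_adj_next_line:
  assumes "occupied x"
  shows "rc_adj M m n x (next_line x)"
proof -
  obtain i j where edge: "{x, next_line x} = {Inl i, Inr j}"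
    using next_line_edge[OF assms] .
  then have "i \<in> {1..m}" "j \<in> {1..n}"
    using line_last_on_edge[OF assms edge] by (simp_all add: on_line_def)
  then have "M i j \<noteq> 0"
    using incell_nonzero incell_line_last_edge[OF assms edge] by blast
  then show ?thesis
    using edge \<open>i \<in> {1..m}\<close> \<open>j \<in> {1..n}\<close> unfolding rc_adj_def by (auto simp: doubleton_eq_iff)
qed

lemma M_split_restr_line_before:
  assumes "M_split m n c r (restr Pi X) S T" "s \<in> S" "t \<in> T" "on_line x s" "on_line x t"
  shows "line_before x s t"
proof -
  have "s \<in> X" "t \<in> X"
    using assms(1-3) by (auto simp: M_split_def)
  moreover have "(\<forall>i\<in>{1..m}. incol (restr Pi X) i s \<and> incol (restr Pi X) i t \<longrightarrow> col_before c i s t) \<and>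
      (\<forall>j\<in>{1..n}. inrow (restr Pi X) j s \<and> inrow (restr Pi X) j t \<longrightarrow> row_before r j s t)"
    using assms(1-3) unfolding M_split_def by blast
  ultimately show ?thesis
    using assms(4,5) by (cases x) (simp_all add: on_line_def line_before_def)
qed

lemma occupied_funpow_next_line: "occupied y \<Longrightarrow> occupied ((next_line ^^ k) y)"
  by (induction k) (simp_all add: occupied_next_line)

lemma finite_occupied: "finite {x. occupied x}"
proof (rule finite_subset)
  show "{x. occupied x} \<subseteq> Inl ` {1..m} \<union> Inr ` {1..n}"
  proof
    fix x
    assume "x \<in> {x. occupied x}"
    then show "x \<in> Inl ` {1..m} \<union> Inr ` {1..n}"
      by (cases x) (auto simp: occupied_def on_line_def)
  qed
qed simp

lemma incell_cycle_cells_next_line_orbit: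
  assumes "occupied y" "0 < t" "(next_line ^^ t) y = y"
  shows "\<forall>(i, j)\<in>cycle_cells (orbit_list next_line y t). \<exists>p. incell Pi i j p"
proof clarify
  fix i j
  assume "(i, j) \<in> cycle_cells (orbit_list next_line y t)"
  then obtain k where "{(next_line ^^ k) y, next_line ((next_line ^^ k) y)} = {Inl i, Inr j}"
    unfolding cycle_cells_orbit_list[OF assms(2,3)] by auto
  then show "\<exists>p. incell Pi i j p"
    using incell_line_last_edge[OF occupied_funpow_next_line[OF assms(1)]] by blast
qed

lemma last_in_cycle_cells_next_line_orbit:
  assumes "occupied y" "0 < t" "(next_line ^^ t) y = y"
  shows "{p. \<exists>(i, j)\<in>cycle_cells (orbit_list next_line y t). last_in_cell c Pi i j p} =
    range (\<lambda>k. line_last ((next_line ^^ k) y))"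
    (is "?L = ?R")
proof
  note occ = occupied_funpow_next_line[OF assms(1)]
  show "?L \<subseteq> ?R"
    unfolding cycle_cells_orbit_list[OF assms(2,3)] using last_in_cell_iff_line_last[OF occ] by blast
  show "?R \<subseteq> ?L"
  proof
    fix p
    assume "p \<in> ?R"
    then obtain k where p: "p = line_last ((next_line ^^ k) y)"
      by blast
    obtain i j where edge: "{(next_line ^^ k) y, next_line ((next_line ^^ k) y)} = {Inl i, Inr j}"
      using next_line_edge[OF occ] .
    then have "last_in_cell c Pi i j p"
      using last_in_cell_iff_line_last[OF occ edge] p by blast
    then show "p \<in> ?L"
      unfolding cycle_cells_orbit_list[OF assms(2,3)] using edge by blast
  qed
qed

end

section \<open>Indivisible gridded permutations\<close>

locale indivisible_gridding = pmm_gridding +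
  assumes indivisible: "M_indivisible M m n c r Pi"
    and several_points: "1 < card (gpts Pi)"
begin

lemma ex_occupied: "\<exists>x. occupied x"
proof -
  obtain p where "p \<in> gpts Pi"
    using several_points by (metis card.empty ex_in_conv not_less_zero)
  then show ?thesis
    using ex_on_line occupied_def by blast
qed

lemma ex_later_point:
  assumes "p \<in> gpts Pi"
  shows "\<exists>x q. on_line x p \<and> on_line x q \<and> line_before x p q"
proof (rule ccontr)
  assume none: "\<not> ?thesis"
  have before_p: "line_before x s p" if "s \<noteq> p" "on_line x s" "on_line x p" for x s
  proof -
    have "\<not> line_before x p s"
      using none that(2,3) by blast
    moreover have "line_key x s \<noteq> line_key x p"
      using line_key_inj[OF that(2,3)] that(1) by blast
    ultimately show ?thesis
      unfolding line_before_iff_key by linarith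
  qed
  have "gpts Pi - {p} \<noteq> {}"
  proof
    assume "gpts Pi - {p} = {}"
    then have "gpts Pi = {p}"
      using assms by blast
    then show False
      using several_points by simp
  qed
  moreover have "col_before c i s p" if "s \<noteq> p" "i \<in> {1..m}" "incol Pi i s" "incol Pi i p" for s i
    using before_p[where x = "Inl i" and s = s] that by (simp add: on_line_def line_before_def)
  moreover have "row_before r j s p" if "s \<noteq> p" "j \<in> {1..n}" "inrow Pi j s" "inrow Pi j p" for s j
    using before_p[where x = "Inr j" and s = s] that by (simp add: on_line_def line_before_def)
  ultimately have "M_split m n c r Pi (gpts Pi - {p}) {p}"
    unfolding M_split_def using assms by auto
  then show False
    using indivisible M_divisible_iff_split[OF gridded] by (auto simp: M_indivisible_def)
qed

lemma line_last_before_next: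
  assumes "occupied x"
  shows "line_before (next_line x) (line_last x) (line_last (next_line x))"
proof -
  obtain y q where y: "on_line y (line_last x)" "on_line y q" "line_before y (line_last x) q"
    using ex_later_point on_line_gpts line_last_on_line[OF assms] by blast
  have "y \<noteq> x"
  proof
    assume "y = x"
    then have "line_key y q \<le> line_key y (line_last x)"
      using line_key_le_line_last[OF assms] y(2) by simp
    then show False
      using y(3) by (simp add: line_before_iff_key)
  qed
  then have "y = next_line x"
    using lines_through_line_last[OF assms y(1)] by blast
  then have "line_key y q \<le> line_key y (line_last (next_line x))"
    using line_key_le_line_last[OF occupied_next_line[OF assms]] y(2) by simp
  then show ?thesis
    using y(3) \<open>y = next_line x\<close> by (simp add: line_before_iff_key)
qed

lemma next_line_next_line_neq:
  assumes "occupied x"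
  shows "next_line (next_line x) \<noteq> x"
proof
  assume returns: "next_line (next_line x) = x"
  let ?p = "line_last x"
  let ?q = "line_last (next_line x)"
  have x': "occupied (next_line x)"
    using occupied_next_line[OF assms] .
  have before: "line_before (next_line x) ?p ?q"
    using line_last_before_next[OF assms] .
  then have "?q \<noteq> ?p"
    by (auto simp: line_before_iff_key)
  moreover have "on_line x ?q"
    using line_last_on_next_line[OF x'] returns by simp
  ultimately have "line_before x ?q ?p"
    using line_before_line_last[OF assms] by blast
  moreover have "line_before x ?q ?p \<longleftrightarrow> line_before (next_line x) ?q ?p"
    using \<open>on_line x ?q\<close> \<open>?q \<noteq> ?p\<close> line_last_on_line[OF assms] isl_next_line[OF assms]
      line_last_on_line[OF x'] line_last_on_next_line[OF assms] returns
    by (intro line_before_crossing_lines) auto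
  ultimately show False
    using before by (auto simp: line_before_iff_key)
qed

lemma next_line_period_ge_3:
  assumes "occupied y" "0 < t" "(next_line ^^ t) y = y"
  shows "3 \<le> t"
proof -
  have "t \<noteq> 1"
    using isl_next_line[OF assms(1)] assms(3) by auto
  moreover have "t \<noteq> 2"
    using next_line_next_line_neq[OF assms(1)] assms(3) by (auto simp: numeral_2_eq_2)
  ultimately show ?thesis
    using assms(2) by linarith
qed

lemma M_split_line_last_next_line:
  assumes split: "M_split m n c r (restr Pi X) S T" and "occupied x"
    and "line_last x \<in> T" "line_last (next_line x) \<in> X"
  shows "line_last (next_line x) \<in> T"
proof (rule ccontr)
  let ?q = "line_last (next_line x)"
  have on_next: "on_line (next_line x) ?q"
    using line_last_on_line[OF occupied_next_line[OF assms(2)]] .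
  assume "?q \<notin> T"
  moreover have "S \<union> T = gpts Pi \<inter> X"
    using split by (simp add: M_split_def)
  ultimately have "?q \<in> S"
    using on_line_gpts[OF on_next] assms(4) by blast
  then have "line_before (next_line x) ?q (line_last x)"
    using M_split_restr_line_before[OF split _ assms(3) on_next line_last_on_next_line[OF assms(2)]]
    by blast
  then show False
    using line_last_before_next[OF assms(2)] by (auto simp: line_before_iff_key)
qed

lemma M_indivisible_line_lasts_of_periodic_orbit:
  assumes "occupied y" "0 < t" "(next_line ^^ t) y = y"
  shows "M_indivisible M m n c r (restr Pi (range (\<lambda>k. line_last ((next_line ^^ k) y))))"
  unfolding M_indivisible_def
proof
  let ?X = "range (\<lambda>k. line_last ((next_line ^^ k) y))"
  assume "M_divisible M m n c r (restr Pi ?X)"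
  then obtain S T where split: "M_split m n c r (restr Pi ?X) S T"
    using M_divisible_iff_split[OF gridded_restr[OF gridded]] by blast
  have occ: "occupied ((next_line ^^ k) y)" for k
    using occupied_funpow_next_line[OF assms(1)] .
  have "?X \<subseteq> gpts Pi"
    using on_line_gpts line_last_on_line[OF occ] by blast
  then have ST: "S \<union> T = ?X" "S \<inter> T = {}" "T \<noteq> {}"
    using split by (auto simp: M_split_def)
  then obtain t0 where "t0 \<in> T"
    by blast
  moreover obtain e where "t0 = line_last ((next_line ^^ e) y)"
    using ST(1) \<open>t0 \<in> T\<close> by blast
  ultimately have base: "line_last ((next_line ^^ e) y) \<in> T"
    by simp
  have in_X: "line_last (next_line ((next_line ^^ k) y)) \<in> ?X" for k
    using rangeI[of "\<lambda>k. line_last ((next_line ^^ k) y)" "Suc k"] by simp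
  have "line_last ((next_line ^^ k) y) \<in> T" for k
    using assms(2,3) base M_split_line_last_next_line[OF split occ _ in_X]
    by (rule periodic_orbit_induct[where P = "\<lambda>z. line_last z \<in> T"])
  then have "?X \<subseteq> T"
    by (simp add: image_subset_iff)
  then have "S \<subseteq> T"
    using ST(1) by (metis Un_subset_iff)
  then have "S = {}"
    using ST(2) by (metis Int_absorb2)
  then show False
    using split by (simp add: M_split_def)
qed

lemma ex_next_line_cycle:
  obtains y t where "occupied y" "0 < t" "(next_line ^^ t) y = y"
    "inj_on (\<lambda>k. (next_line ^^ k) y) {..<t}"
proof -
  obtain x where "x \<in> {x. occupied x}"
    using ex_occupied by blast
  moreover have "next_line ` {x. occupied x} \<subseteq> {x. occupied x}"
    using occupied_next_line by blast
  ultimately show ?thesis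
    using funpow_periodic_point[OF finite_occupied] that by blast
qed

lemma rc_cycle_next_line_orbit:
  assumes "occupied y" "0 < t" "(next_line ^^ t) y = y" "inj_on (\<lambda>k. (next_line ^^ k) y) {..<t}"
  shows "rc_cycle M m n (orbit_list next_line y t)"
  using next_line_period_ge_3[OF assms(1-3)] assms(3,4)
    rc_adj_next_line[OF occupied_funpow_next_line[OF assms(1)]]
  by (rule rc_cycle_orbit_list)

end

theorem lemma3p7:
  fixes M :: "nat \<Rightarrow> nat \<Rightarrow> int" and m n :: nat and c r :: "nat \<Rightarrow> int" and Pi :: gperm
  assumes "gridding_matrix M m n"
    and "pmm_witness M m n c r"
    and "gridded M m n Pi"
    and "M_indivisible M m n c r Pi"
    and "card (gpts Pi) > 1"
  shows "\<exists>vs. rc_cycle M m n vs \<and>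
           (\<forall>(i, j)\<in>cycle_cells vs. \<exists>p. incell Pi i j p) \<and>
           M_indivisible M m n c r
             (restr Pi {p. \<exists>(i, j)\<in>cycle_cells vs. last_in_cell c Pi i j p})"
proof -
  interpret indivisible_gridding M m n c r Pi
    using assms(2-5) by unfold_locales
  obtain y t where y: "occupied y" and t: "0 < t" "(next_line ^^ t) y = y"
    and inj: "inj_on (\<lambda>k. (next_line ^^ k) y) {..<t}"
    by (rule ex_next_line_cycle)
  let ?vs = "orbit_list next_line y t"
  have "rc_cycle M m n ?vs"
    using y t inj by (rule rc_cycle_next_line_orbit)
  moreover have "\<forall>(i, j)\<in>cycle_cells ?vs. \<exists>p. incell Pi i j p"
    using y t by (rule incell_cycle_cells_next_line_orbit)
  moreover have "M_indivisible M m n c r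
      (restr Pi {p. \<exists>(i, j)\<in>cycle_cells ?vs. last_in_cell c Pi i j p})"
    unfolding last_in_cycle_cells_next_line_orbit[OF y t]
    using y t by (rule M_indivisible_line_lasts_of_periodic_orbit)
  ultimately show ?thesis
    by blast
qed

end
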